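(* (a) Let $n\ge1$ and let $x\in\beta\mathbb{N}$ be an ultrafilter on a finite level with $x\notin\overline{L_0\cup L_1\cup\cdots\cup L_{n-1}}$. Then there is an ultrafilter $y\in\overline{L_n}$ such that $y\,\tilde{\mid}\,x$. (b) Let $x\in\overline{L_m}$ and let $n\ge m$. Then there exists an ultrafilter $y\in\overline{L_n}$ such that $x\,\tilde{\mid}\,y$.
   Context: $\mathbb{N}=\{1,2,3,\dots\}$; $\beta\mathbb{N}$ is the set of ultrafilters on $\mathbb{N}$ (Stone–Čech compactification of discrete $\mathbb{N}$). For $A\subseteq\mathbb{N}$, $\overline{A}=\{x\in\beta\mathbb{N}:A\in x\}$. $P$ is the set of primes, $L_0=\{1\}$, $L_n=\{a_1\cdots a_n:a_1,\dots,a_n\in P\}$. An ultrafilter $x$ is on a finite level if $x\in\overline{L_i}$ for some $i\ge0$. For $x,y\in\beta\mathbb{N}$, $x\,\tilde{\mid}\,y$ iff for every $A\in x$ the set $\{k\in\mathbb{N}:\exists a\in A,\ a\mid k\}$ belongs to $y$. *)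

theory Defs
  imports "HOL-Computational_Algebra.Primes"
begin

definition Npos :: "nat set" where
  "Npos = {k. 1 \<le> k}"

definition ultrafilter_N :: "nat set set \<Rightarrow> bool" where
  "ultrafilter_N U \<longleftrightarrow>
     U \<subseteq> Pow Npos \<and> Npos \<in> U \<and> {} \<notin> U \<and>
     (\<forall>A B. A \<in> U \<longrightarrow> A \<subseteq> B \<longrightarrow> B \<subseteq> Npos \<longrightarrow> B \<in> U) \<and>
     (\<forall>A B. A \<in> U \<longrightarrow> B \<in> U \<longrightarrow> A \<inter> B \<in> U) \<and>
     (\<forall>A. A \<subseteq> Npos \<longrightarrow> A \<in> U \<or> Npos - A \<in> U)"

definition bar :: "nat set \<Rightarrow> nat set set set" where
  "bar A = {U. ultrafilter_N U \<and> A \<in> U}"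

definition L :: "nat \<Rightarrow> nat set" where
  "L n = {k. \<exists>ps. length ps = n \<and> (\<forall>p\<in>set ps. prime p) \<and> k = prod_list ps}"

definition finite_level :: "nat set set \<Rightarrow> bool" where
  "finite_level x \<longleftrightarrow> (\<exists>i. x \<in> bar (L i))"

definition dvd_up :: "nat set \<Rightarrow> nat set" where
  "dvd_up A = {k \<in> Npos. \<exists>a\<in>A. a dvd k}"

definition udvd :: "nat set set \<Rightarrow> nat set set \<Rightarrow> bool" (infix "~|" 50) where
  "udvd x y \<longleftrightarrow> (\<forall>A\<in>x. dvd_up A \<in> y)"

end

theory Submission
  imports Defs
begin

text \<open>Both parts use the image ultrafilter \<open>g(x)\<close> of \<open>x\<close> under a map \<open>g\<close> with
  \<open>g k \<mid> k\<close> (respectively \<open>k \<mid> g k\<close>), which then satisfies \<open>g(x) ~| x\<close> (respectively \<open>x ~| g(x)\<close>).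
  For (a), \<open>x\<close> lies on a level \<open>L i\<close> with \<open>i \<ge> n\<close>, and \<open>g\<close> picks for each \<open>k \<in> L i\<close> a
  divisor in \<open>L n\<close>; for (b), \<open>g\<close> multiplies by \<open>2^(n-m)\<close>, moving \<open>L m\<close> into \<open>L n\<close>.\<close>

lemma L_subset_Npos: "L n \<subseteq> Npos"
proof
  fix k assume "k \<in> L n"
  then obtain ps where "\<forall>p\<in>set ps. prime p" "k = prod_list ps"
    unfolding L_def by auto
  then have "k \<noteq> 0" by (auto simp: prod_list_zero_iff)
  then show "k \<in> Npos" unfolding Npos_def by simp
qed

lemma L_times_power_of_two:
  assumes "k \<in> L m" shows "k * 2 ^ j \<in> L (m + j)"
proof -
  obtain ps where ps: "length ps = m" "\<forall>p\<in>set ps. prime p" "k = prod_list ps"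
    using assms unfolding L_def by auto
  have "k * 2 ^ j = prod_list (ps @ replicate j 2)" using ps(3) by simp
  then show ?thesis unfolding L_def using ps(1,2) by (intro CollectI exI[of _ "ps @ replicate j 2"]) auto
qed

lemma L_has_divisor_in_L:
  assumes "k \<in> L i" "n \<le> i" shows "\<exists>d\<in>L n. d dvd k"
proof -
  obtain ps where ps: "length ps = i" "\<forall>p\<in>set ps. prime p" "k = prod_list ps"
    using assms(1) unfolding L_def by auto
  have "prod_list (take n ps) dvd k"
    using ps(3) by (metis append_take_drop_id dvd_triv_left prod_list.append)
  moreover have "prod_list (take n ps) \<in> L n"
    unfolding L_def using ps(1,2) assms(2)
    by (intro CollectI exI[of _ "take n ps"]) (auto dest: in_set_takeD)
  ultimately show ?thesis by blast
qed

lemma ultrafilter_N_subset: "ultrafilter_N x \<Longrightarrow> A \<in> x \<Longrightarrow> A \<subseteq> Npos"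
  unfolding ultrafilter_N_def by auto

lemma ultrafilter_N_Npos: "ultrafilter_N x \<Longrightarrow> Npos \<in> x"
  unfolding ultrafilter_N_def by blast

lemma ultrafilter_N_empty: "ultrafilter_N x \<Longrightarrow> {} \<notin> x"
  unfolding ultrafilter_N_def by blast

lemma ultrafilter_N_mono: "ultrafilter_N x \<Longrightarrow> A \<in> x \<Longrightarrow> A \<subseteq> B \<Longrightarrow> B \<subseteq> Npos \<Longrightarrow> B \<in> x"
  unfolding ultrafilter_N_def by metis

lemma ultrafilter_N_Int: "ultrafilter_N x \<Longrightarrow> A \<in> x \<Longrightarrow> B \<in> x \<Longrightarrow> A \<inter> B \<in> x"
  unfolding ultrafilter_N_def by metis

lemma ultrafilter_N_compl: "ultrafilter_N x \<Longrightarrow> A \<subseteq> Npos \<Longrightarrow> A \<in> x \<or> Npos - A \<in> x"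
  unfolding ultrafilter_N_def by metis

lemma ultrafilter_N_level_ge:
  assumes "ultrafilter_N x" "L i \<in> x" "x \<notin> bar (\<Union>j<n. L j)"
  shows "n \<le> i"
proof (rule ccontr)
  assume "\<not> n \<le> i"
  then have "L i \<subseteq> (\<Union>j<n. L j)" by (intro UN_upper) simp
  then have "(\<Union>j<n. L j) \<in> x"
    using ultrafilter_N_mono[OF assms(1,2)] L_subset_Npos by blast
  then show False using assms(1,3) unfolding bar_def by simp
qed

definition uf_image :: "(nat \<Rightarrow> nat) \<Rightarrow> nat set set \<Rightarrow> nat set set" where
  "uf_image g x = {B. B \<subseteq> Npos \<and> {k\<in>Npos. g k \<in> B} \<in> x}"

lemma ultrafilter_N_uf_image:
  assumes x: "ultrafilter_N x" and g: "g ` Npos \<subseteq> Npos"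
  shows "ultrafilter_N (uf_image g x)"
proof -
  let ?pre = "\<lambda>B. {k\<in>Npos. g k \<in> B}"
  have mem_iff: "B \<in> uf_image g x \<longleftrightarrow> B \<subseteq> Npos \<and> ?pre B \<in> x" for B
    unfolding uf_image_def by simp
  show ?thesis unfolding ultrafilter_N_def
  proof (intro conjI allI impI)
    show "uf_image g x \<subseteq> Pow Npos" unfolding uf_image_def by blast
    have "?pre Npos = Npos" using g by blast
    then show "Npos \<in> uf_image g x" using ultrafilter_N_Npos[OF x] mem_iff by simp
    show "{} \<notin> uf_image g x" using ultrafilter_N_empty[OF x] mem_iff by simp
  next
    fix A B assume "A \<in> uf_image g x" "A \<subseteq> B" "B \<subseteq> Npos"
    then have "?pre A \<in> x" "?pre A \<subseteq> ?pre B" "?pre B \<subseteq> Npos" using mem_iff by auto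
    then have "?pre B \<in> x" by (rule ultrafilter_N_mono[OF x])
    then show "B \<in> uf_image g x" using \<open>B \<subseteq> Npos\<close> mem_iff by blast
  next
    fix A B assume "A \<in> uf_image g x" "B \<in> uf_image g x"
    then have "?pre A \<in> x" "?pre B \<in> x" "A \<inter> B \<subseteq> Npos" using mem_iff by auto
    then have "?pre A \<inter> ?pre B \<in> x" by (intro ultrafilter_N_Int[OF x])
    moreover have "?pre A \<inter> ?pre B = ?pre (A \<inter> B)" by blast
    ultimately show "A \<inter> B \<in> uf_image g x" using \<open>A \<inter> B \<subseteq> Npos\<close> mem_iff by simp
  next
    fix A assume "A \<subseteq> Npos"
    have "?pre A \<in> x \<or> Npos - ?pre A \<in> x" by (rule ultrafilter_N_compl[OF x]) blast
    moreover have "Npos - ?pre A = ?pre (Npos - A)" using g by blast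
    ultimately show "A \<in> uf_image g x \<or> Npos - A \<in> uf_image g x"
      using \<open>A \<subseteq> Npos\<close> mem_iff by auto
  qed
qed

lemma mem_uf_image:
  assumes x: "ultrafilter_N x" and "S \<in> x" "g ` S \<subseteq> B" "B \<subseteq> Npos"
  shows "B \<in> uf_image g x"
proof -
  have "S \<subseteq> {k\<in>Npos. g k \<in> B}" using assms ultrafilter_N_subset[OF x] by blast
  then have "{k\<in>Npos. g k \<in> B} \<in> x" using ultrafilter_N_mono[OF x \<open>S \<in> x\<close>] by blast
  then show ?thesis using \<open>B \<subseteq> Npos\<close> unfolding uf_image_def by blast
qed

lemma dvd_up_subset_Npos: "dvd_up A \<subseteq> Npos"
  unfolding dvd_up_def by blast

lemma uf_image_udvd_if_dvd:
  assumes x: "ultrafilter_N x" and g: "\<forall>k\<in>Npos. g k dvd k"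
  shows "uf_image g x ~| x"
  unfolding udvd_def
proof
  fix A assume "A \<in> uf_image g x"
  then have "{k\<in>Npos. g k \<in> A} \<in> x" unfolding uf_image_def by simp
  moreover have "{k\<in>Npos. g k \<in> A} \<subseteq> dvd_up A" using g unfolding dvd_up_def by blast
  ultimately show "dvd_up A \<in> x" using ultrafilter_N_mono[OF x] dvd_up_subset_Npos by blast
qed

lemma udvd_uf_image_if_dvd:
  assumes x: "ultrafilter_N x" and g: "\<forall>k\<in>Npos. k dvd g k \<and> g k \<in> Npos"
  shows "x ~| uf_image g x"
  unfolding udvd_def
proof
  fix A assume A: "A \<in> x"
  then have "g ` A \<subseteq> dvd_up A" using g ultrafilter_N_subset[OF x A] unfolding dvd_up_def by blast
  then show "dvd_up A \<in> uf_image g x" using mem_uf_image[OF x A] dvd_up_subset_Npos by blast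
qed

text \<open>Part (a) holds without \<open>1 \<le> n\<close>: for \<open>n = 0\<close> the witness is the principal
  ultrafilter at \<open>1\<close>.\<close>

lemma exists_lower_level_udvd:
  assumes x: "ultrafilter_N x" "finite_level x" "x \<notin> bar (\<Union>j<n. L j)"
  shows "\<exists>y. y \<in> bar (L n) \<and> y ~| x"
proof -
  obtain i where Li: "L i \<in> x" using x(2) unfolding finite_level_def bar_def by auto
  have "n \<le> i" using ultrafilter_N_level_ge[OF x(1) Li x(3)] .
  then have "\<forall>k\<in>L i. \<exists>d. d \<in> L n \<and> d dvd k" using L_has_divisor_in_L by blast
  then obtain d where d: "\<forall>k\<in>L i. d k \<in> L n \<and> d k dvd k" by metis
  define g where "g k = (if k \<in> L i then d k else k)" for k
  have g_dvd: "\<forall>k\<in>Npos. g k dvd k" using d unfolding g_def by simp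
  then have "g ` Npos \<subseteq> Npos" unfolding Npos_def by (auto simp: Suc_le_eq dvd_pos_nat)
  moreover have "g ` L i \<subseteq> L n" using d unfolding g_def by auto
  with mem_uf_image[OF x(1) Li] L_subset_Npos have "L n \<in> uf_image g x" by blast
  ultimately show ?thesis
    using ultrafilter_N_uf_image[OF x(1)] uf_image_udvd_if_dvd[OF x(1) g_dvd]
    unfolding bar_def by blast
qed

lemma exists_upper_level_udvd:
  assumes x: "x \<in> bar (L m)" and "m \<le> n"
  shows "\<exists>y. y \<in> bar (L n) \<and> x ~| y"
proof -
  have uf: "ultrafilter_N x" and Lm: "L m \<in> x" using x unfolding bar_def by auto
  define g where "g k = k * 2 ^ (n - m)" for k :: nat
  have g: "\<forall>k\<in>Npos. k dvd g k \<and> g k \<in> Npos" unfolding g_def Npos_def by simp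
  have "g ` L m \<subseteq> L n"
    using L_times_power_of_two[of _ m "n - m"] \<open>m \<le> n\<close> unfolding g_def by auto
  then have "L n \<in> uf_image g x" using mem_uf_image[OF uf Lm] L_subset_Npos by blast
  moreover have "g ` Npos \<subseteq> Npos" using g by blast
  ultimately show ?thesis
    using ultrafilter_N_uf_image[OF uf] udvd_uf_image_if_dvd[OF uf g]
    unfolding bar_def by blast
qed

theorem theorem2p14:
  shows "(\<forall>(n::nat) x. 1 \<le> n \<longrightarrow> ultrafilter_N x \<longrightarrow> finite_level x \<longrightarrow>
            x \<notin> bar (\<Union>i<n. L i) \<longrightarrow>
            (\<exists>y. y \<in> bar (L n) \<and> y ~| x))
       \<and> (\<forall>(m::nat) (n::nat) x. x \<in> bar (L m) \<longrightarrow> m \<le> n \<longrightarrow>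
            (\<exists>y. y \<in> bar (L n) \<and> x ~| y))"
  using exists_lower_level_udvd exists_upper_level_udvd by blast

end
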